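(* Any one-sided (possibly adaptive) tester for $k$-monotonicity of functions $f\colon[n]\to\{0,1\}$ with distance parameter $\varepsilon$ must have query complexity $\Omega(k/\varepsilon)$.
   Context: $[n]=\{1,\dots,n\}$ with its usual total order. A function $f\colon[n]\to\{0,1\}$ is $k$-monotone if there do not exist $x_1\leq x_2\leq\cdots\leq x_{k+1}$ with $f(x_1)=1$ and $f(x_i)\neq f(x_{i+1})$ for all $i\in[k]$. Distance is normalized Hamming distance; $f$ is $\varepsilon$-far from $k$-monotone if $\Pr_x[f(x)\neq g(x)]\geq\varepsilon$ for every $k$-monotone $g$. A tester, given $\varepsilon$ and query access to $f$, accepts $k$-monotone $f$ with probability at least $2/3$ and rejects $\varepsilon$-far $f$ with probability at least $2/3$; one-sided means $k$-monotone functions are accepted with probability $1$. Adaptive testers may choose queries depending on previous answers. *)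

theory Defs
  imports "HOL-Probability.Probability"
begin

text \<open>Functions [n] -> {0,1} are modelled as f :: nat => bool, only values on {1..n} matter
  (True = 1, False = 0).\<close>

definition k_monotone :: "nat \<Rightarrow> nat \<Rightarrow> (nat \<Rightarrow> bool) \<Rightarrow> bool" where
  "k_monotone n k f \<longleftrightarrow>
     \<not> (\<exists>x :: nat \<Rightarrow> nat.
          (\<forall>i\<in>{1..k+1}. x i \<in> {1..n}) \<and>
          (\<forall>i\<in>{1..k}. x i \<le> x (Suc i)) \<and>
          f (x 1) \<and>
          (\<forall>i\<in>{1..k}. f (x i) \<noteq> f (x (Suc i))))"

definition fdist :: "nat \<Rightarrow> (nat \<Rightarrow> bool) \<Rightarrow> (nat \<Rightarrow> bool) \<Rightarrow> real" where
  "fdist n f g = real (card {x\<in>{1..n}. f x \<noteq> g x}) / real n"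

definition far_from_k_monotone :: "nat \<Rightarrow> nat \<Rightarrow> real \<Rightarrow> (nat \<Rightarrow> bool) \<Rightarrow> bool" where
  "far_from_k_monotone n k \<epsilon> f \<longleftrightarrow> (\<forall>g. k_monotone n k g \<longrightarrow> fdist n f g \<ge> \<epsilon>)"

text \<open>Deterministic adaptive query algorithms = decision trees.
  Node x t0 t1 queries f at x and continues with t1 if f x = 1, with t0 otherwise.
  Leaf b outputs b (True = accept).\<close>

datatype dtree = Leaf bool | Node nat dtree dtree

fun run :: "dtree \<Rightarrow> (nat \<Rightarrow> bool) \<Rightarrow> bool" where
  "run (Leaf b) f = b"
| "run (Node x t0 t1) f = (if f x then run t1 f else run t0 f)"

fun num_queries :: "dtree \<Rightarrow> (nat \<Rightarrow> bool) \<Rightarrow> nat" where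
  "num_queries (Leaf b) f = 0"
| "num_queries (Node x t0 t1) f = Suc (if f x then num_queries t1 f else num_queries t0 f)"

fun queries_in :: "nat \<Rightarrow> dtree \<Rightarrow> bool" where
  "queries_in n (Leaf b) = True"
| "queries_in n (Node x t0 t1) = (x \<in> {1..n} \<and> queries_in n t0 \<and> queries_in n t1)"

text \<open>A randomized (possibly adaptive) tester is a probability distribution over decision
  trees.\<close>

definition one_sided_tester ::
  "nat \<Rightarrow> nat \<Rightarrow> real \<Rightarrow> dtree pmf \<Rightarrow> nat \<Rightarrow> bool" where
  "one_sided_tester n k \<epsilon> T q \<longleftrightarrow>
     (\<forall>t\<in>set_pmf T. queries_in n t \<and> (\<forall>f. num_queries t f \<le> q)) \<and>
     (\<forall>f. k_monotone n k f \<longrightarrow> measure_pmf.prob T {t. run t f} = 1) \<and>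
     (\<forall>f. far_from_k_monotone n k \<epsilon> f \<longrightarrow> measure_pmf.prob T {t. \<not> run t f} \<ge> 2/3)"

end

theory Submission
  imports Defs
begin

text \<open>Cut [n] into m blocks of length 2h, each split into a left and a right half, and let
  f_S be the indicator of the left halves of the blocks c \<in> S. Along an alternating chain every
  1 lies in a new left half, so f_S is k-monotone when |S| < r = (k + 2) div 2. Conversely a
  k-monotone g is mixed (1 somewhere on the left, 0 somewhere on the right half) on fewer than r
  blocks and disagrees with f_S on a whole half of every other block; with |S| = 2r and
  m \<approx> r / (4 \<epsilon>) this makes f_S \<epsilon>-far from k-monotone.

  A decision tree run on f_S only learns the blocks of S whose left halves it queries. If it
  learns fewer than r of them, it behaves as on the k-monotone indicator of those blocks, so a
  one-sided tester accepts. A tree with q queries learns r blocks for at most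
  (q choose r) (m - r choose r) \<le> (m choose 2r) / 2 of the sets S once 12 q \<le> m, whereas
  averaging over S shows that some tree rejects two thirds of them. Hence q > m / 12, which is
  of order k / \<epsilon>.\<close>

definition block :: "nat \<Rightarrow> nat \<Rightarrow> nat set" where
  "block h c = {c * (2 * h)<..Suc c * (2 * h)}"

definition left_half :: "nat \<Rightarrow> nat \<Rightarrow> nat set" where
  "left_half h c = {c * (2 * h)<..c * (2 * h) + h}"

definition right_half :: "nat \<Rightarrow> nat \<Rightarrow> nat set" where
  "right_half h c = {c * (2 * h) + h<..Suc c * (2 * h)}"

definition block_fun :: "nat \<Rightarrow> nat set \<Rightarrow> nat \<Rightarrow> bool" where
  "block_fun h S x \<longleftrightarrow> (\<exists>c\<in>S. x \<in> left_half h c)"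

lemma left_half_subset_block: "left_half h c \<subseteq> block h c"
  and right_half_subset_block: "right_half h c \<subseteq> block h c"
  by (auto simp: block_def left_half_def right_half_def)

lemma card_left_half: "card (left_half h c) = h"
  and card_right_half: "card (right_half h c) = h"
  by (simp_all add: left_half_def right_half_def)

lemma left_half_less_right_half: "x \<in> left_half h c \<Longrightarrow> y \<in> right_half h c \<Longrightarrow> x < y"
  by (simp add: left_half_def right_half_def)

lemma block_less:
  assumes "c < c'" "x \<in> block h c" "y \<in> block h c'"
  shows "x < y"
proof -
  have "Suc c * (2 * h) \<le> c' * (2 * h)"
    using assms(1) by (intro mult_le_mono1) simp
  then show ?thesis
    using assms(2,3) by (simp add: block_def)
qed

lemma block_eqI:
  assumes "x \<in> block h c" "x \<in> block h c'"
  shows "c = c'"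
proof (rule ccontr)
  assume "c \<noteq> c'"
  then consider "c < c'" | "c' < c"
    by linarith
  then show False
    using block_less[of c c' x h x] block_less[of c' c x h x] assms by cases auto
qed

lemma left_half_eqI: "x \<in> left_half h c \<Longrightarrow> x \<in> left_half h c' \<Longrightarrow> c = c'"
  using block_eqI left_half_subset_block by blast

lemma left_half_blocks: "x \<in> left_half h c \<Longrightarrow> {c'. x \<in> left_half h c'} = {c}"
  using left_half_eqI by blast

lemma block_subset_atLeastAtMost:
  assumes "c < m" "m * (2 * h) \<le> n"
  shows "block h c \<subseteq> {1..n}"
proof -
  have "Suc c * (2 * h) \<le> m * (2 * h)"
    using assms(1) by (intro mult_le_mono1) simp
  then show ?thesis
    using assms(2) by (auto simp: block_def)
qed

lemma block_fun_iff: "x \<in> left_half h c \<Longrightarrow> block_fun h S x \<longleftrightarrow> c \<in> S"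
  unfolding block_fun_def using left_half_eqI by blast

lemma not_block_fun_right_half:
  assumes "x \<in> right_half h c"
  shows "\<not> block_fun h S x"
proof
  assume "block_fun h S x"
  then obtain c' where "x \<in> left_half h c'"
    by (auto simp: block_fun_def)
  moreover have "c' = c"
    using calculation assms left_half_subset_block right_half_subset_block by (blast intro: block_eqI)
  ultimately show False
    using left_half_less_right_half[of x h c x] assms by simp
qed

lemma alternating_chain_parity:
  assumes "\<forall>i\<in>{1..k}. f (x i) \<noteq> f (x (Suc i))" "f (x 1)" "1 \<le> i" "i \<le> k + 1"
  shows "f (x i) = odd i"
  using assms(3,4)
proof (induction i rule: nat_induct_at_least)
  case (Suc i)
  then show ?case
    using assms(1) by force
qed (use assms(2) in simp)

lemma chain_le:
  fixes x :: "nat \<Rightarrow> nat"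
  assumes "\<forall>i\<in>{1..k}. x i \<le> x (Suc i)" "1 \<le> i" "i \<le> j" "j \<le> k + 1"
  shows "x i \<le> x j"
  using assms(3,4)
proof (induction j rule: nat_induct_at_least)
  case (Suc j)
  then have "x i \<le> x j" "x j \<le> x (Suc j)"
    using assms(1,2) by auto
  then show ?case
    by (rule order_trans)
qed simp

lemma block_fun_k_monotone:
  assumes "finite S" "card S < (k + 2) div 2"
  shows "k_monotone n k (block_fun h S)"
  unfolding k_monotone_def
proof
  define r where "r = (k + 2) div 2"
  assume "\<exists>x. (\<forall>i\<in>{1..k+1}. x i \<in> {1..n}) \<and> (\<forall>i\<in>{1..k}. x i \<le> x (Suc i)) \<and>
      block_fun h S (x 1) \<and> (\<forall>i\<in>{1..k}. block_fun h S (x i) \<noteq> block_fun h S (x (Suc i)))"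
  then obtain x where mono: "\<forall>i\<in>{1..k}. x i \<le> x (Suc i)" and first: "block_fun h S (x 1)"
    and alt: "\<forall>i\<in>{1..k}. block_fun h S (x i) \<noteq> block_fun h S (x (Suc i))"
    by blast
  have parity: "block_fun h S (x i) = odd i" if "1 \<le> i" "i \<le> k + 1" for i
    using alternating_chain_parity[of k "block_fun h S" x i, OF alt first that] .
  define owner where "owner j = (SOME c. c \<in> S \<and> x (2 * j + 1) \<in> left_half h c)" for j
  have owner: "owner j \<in> S \<and> x (2 * j + 1) \<in> left_half h (owner j)" if "j < r" for j
  proof -
    have "block_fun h S (x (2 * j + 1))"
      using parity[of "2 * j + 1"] that by (simp add: r_def)
    then have "\<exists>c. c \<in> S \<and> x (2 * j + 1) \<in> left_half h c"
      by (auto simp: block_fun_def)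
    then show ?thesis
      unfolding owner_def by (rule someI_ex)
  qed
  \<comment> \<open>Between two ones of the chain lying in the same left half there would be a zero.\<close>
  have "inj_on owner {..<r}"
  proof (rule linorder_inj_onI', rule notI)
    fix i j assume ij: "i \<in> {..<r}" "j \<in> {..<r}" "i < j" and eq: "owner i = owner j"
    have le: "x (2 * i + 1) \<le> x (2 * i + 2)" "x (2 * i + 2) \<le> x (2 * j + 1)"
      using ij by (auto intro!: chain_le[OF mono] simp: r_def)
    have "x (2 * i + 2) \<in> left_half h (owner i)"
      using owner[of i] owner[of j] ij eq le by (auto simp: left_half_def)
    then have "block_fun h S (x (2 * i + 2))"
      using owner[of i] ij by (auto simp: block_fun_def)
    moreover have "2 * i + 2 \<le> k + 1"
    proof -
      have "i < j" "j < (k + 2) div 2"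
        using ij by (auto simp: r_def)
      then show ?thesis
        by linarith
    qed
    ultimately show False
      using parity[of "2 * i + 2"] by simp
  qed
  moreover have "owner ` {..<r} \<subseteq> S"
    using owner by auto
  ultimately have "r \<le> card S"
    using card_inj_on_le assms(1) by fastforce
  then show False
    using assms(2) r_def by simp
qed

lemma not_k_monotone_of_interleaving:
  fixes a z :: "nat \<Rightarrow> nat"
  assumes len: "k + 1 \<le> 2 * r"
    and range: "\<And>j. j < r \<Longrightarrow> a j \<in> {1..n} \<and> z j \<in> {1..n}"
    and signs: "\<And>j. j < r \<Longrightarrow> g (a j) \<and> \<not> g (z j)"
    and up: "\<And>j. j < r \<Longrightarrow> a j \<le> z j"
    and down: "\<And>j. Suc j < r \<Longrightarrow> z j \<le> a (Suc j)"
  shows "\<not> k_monotone n k g"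
proof -
  define x where "x i = (if odd i then a ((i - 1) div 2) else z ((i - 1) div 2))" for i
  have x_odd: "x (2 * j + 1) = a j" and x_even: "x (2 * j + 2) = z j" for j
    by (simp_all add: x_def)
  have index: "\<exists>j<r. i = 2 * j + 1 \<or> i = 2 * j + 2" if "i \<in> {1..k+1}" for i
  proof (intro exI conjI)
    show "(i - 1) div 2 < r" "i = 2 * ((i - 1) div 2) + 1 \<or> i = 2 * ((i - 1) div 2) + 2"
      using that len by simp_all presburger+
  qed
  have chain: "x i \<in> {1..n} \<and> g (x i) = odd i" if i: "i \<in> {1..k+1}" for i
  proof -
    obtain j where "j < r" "i = 2 * j + 1 \<or> i = 2 * j + 2"
      using index[OF i] by blast
    then show ?thesis
      using range[of j] signs[of j] x_odd x_even by auto
  qed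
  have mono: "x i \<le> x (Suc i)" if i: "i \<in> {1..k}" for i
  proof -
    obtain j where "j < r" and j: "i = 2 * j + 1 \<or> i = 2 * j + 2"
      using index[of i] i by auto
    then show ?thesis
    proof (elim disjE)
      assume "i = 2 * j + 1"
      then show ?thesis
        using up[OF \<open>j < r\<close>] x_odd x_even by simp
    next
      assume i_even: "i = 2 * j + 2"
      then have "Suc j < r"
        using i len by simp
      then show ?thesis
        using i_even down[of j] x_odd[of "Suc j"] x_even[of j] by simp
    qed
  qed
  have "\<exists>x. (\<forall>i\<in>{1..k+1}. x i \<in> {1..n}) \<and> (\<forall>i\<in>{1..k}. x i \<le> x (Suc i)) \<and>
      g (x 1) \<and> (\<forall>i\<in>{1..k}. g (x i) \<noteq> g (x (Suc i)))"
  proof (intro exI[of _ x] conjI ballI)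
    fix i assume "i \<in> {1..k+1}"
    then show "x i \<in> {1..n}"
      using chain by blast
  next
    fix i assume "i \<in> {1..k}"
    then show "x i \<le> x (Suc i)"
      by (rule mono)
  next
    show "g (x 1)"
      using chain[of 1] by simp
  next
    fix i assume "i \<in> {1..k}"
    then show "g (x i) \<noteq> g (x (Suc i))"
      using chain[of i] chain[of "Suc i"] by simp
  qed
  then show ?thesis
    by (simp add: k_monotone_def)
qed

definition mixed_blocks :: "nat \<Rightarrow> (nat \<Rightarrow> bool) \<Rightarrow> nat set \<Rightarrow> nat set" where
  "mixed_blocks h g S = {c\<in>S. (\<exists>a\<in>left_half h c. g a) \<and> (\<exists>z\<in>right_half h c. \<not> g z)}"

lemma card_mixed_blocks_less:
  assumes km: "k_monotone n k g" and S: "S \<subseteq> {..<m}" and hm: "m * (2 * h) \<le> n"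
  shows "card (mixed_blocks h g S) < (k + 2) div 2"
proof (rule ccontr)
  define r where "r = (k + 2) div 2"
  define G where "G = mixed_blocks h g S"
  assume "\<not> card (mixed_blocks h g S) < (k + 2) div 2"
  then have rG: "r \<le> card G"
    by (simp add: G_def r_def)
  have "finite G"
    by (rule finite_subset[of _ "{..<m}"]) (use S in \<open>auto simp: G_def mixed_blocks_def\<close>)
  define cs where "cs = sorted_list_of_set G"
  have len: "r \<le> length cs"
    using rG by (simp add: cs_def)
  have cs: "cs ! j \<in> G" "cs ! j < m" if "j < r" for j
  proof -
    show "cs ! j \<in> G"
      using that len \<open>finite G\<close> nth_mem[of j cs] by (simp add: cs_def)
    then show "cs ! j < m"
      using S by (auto simp: G_def mixed_blocks_def)
  qed
  have cs_less: "cs ! j < cs ! Suc j" if "Suc j < r" for j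
    using that len sorted_wrt_nth_less[of "(<)" cs j "Suc j"] by (simp add: cs_def)
  define a where "a c = (SOME a. a \<in> left_half h c \<and> g a)" for c
  define z where "z c = (SOME z. z \<in> right_half h c \<and> \<not> g z)" for c
  have a: "a c \<in> left_half h c \<and> g (a c)" and z: "z c \<in> right_half h c \<and> \<not> g (z c)"
    if "c \<in> G" for c
  proof -
    have ex: "\<exists>a. a \<in> left_half h c \<and> g a" "\<exists>z. z \<in> right_half h c \<and> \<not> g z"
      using that by (auto simp: G_def mixed_blocks_def)
    show "a c \<in> left_half h c \<and> g (a c)"
      unfolding a_def by (rule someI_ex[OF ex(1)])
    show "z c \<in> right_half h c \<and> \<not> g (z c)"
      unfolding z_def by (rule someI_ex[OF ex(2)])
  qed
  have in_block: "a (cs ! j) \<in> block h (cs ! j)" "z (cs ! j) \<in> block h (cs ! j)" if "j < r" for j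
    using a[OF cs(1)[OF that]] z[OF cs(1)[OF that]]
      left_half_subset_block[of h "cs ! j"] right_half_subset_block[of h "cs ! j"]
    by auto
  have "\<not> k_monotone n k g"
  proof (rule not_k_monotone_of_interleaving[where a = "\<lambda>j. a (cs ! j)" and z = "\<lambda>j. z (cs ! j)"])
    show "k + 1 \<le> 2 * r"
      unfolding r_def by linarith
    show "a (cs ! j) \<in> {1..n} \<and> z (cs ! j) \<in> {1..n}" if "j < r" for j
      using in_block[OF that] block_subset_atLeastAtMost[OF cs(2)[OF that] hm] by auto
    show "g (a (cs ! j)) \<and> \<not> g (z (cs ! j))" if "j < r" for j
      using a[OF cs(1)[OF that]] z[OF cs(1)[OF that]] by simp
    show "a (cs ! j) \<le> z (cs ! j)" if "j < r" for j
      using left_half_less_right_half[of "a (cs ! j)" h "cs ! j" "z (cs ! j)"]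
        a[OF cs(1)[OF that]] z[OF cs(1)[OF that]] by simp
    show "z (cs ! j) \<le> a (cs ! Suc j)" if "Suc j < r" for j
      using block_less[OF cs_less[OF that] in_block(2)[of j] in_block(1)[of "Suc j"]] that by simp
  qed
  then show False
    using km by blast
qed

definition wrong_half :: "nat \<Rightarrow> (nat \<Rightarrow> bool) \<Rightarrow> nat \<Rightarrow> nat set" where
  "wrong_half h g c = (if \<forall>a\<in>left_half h c. \<not> g a then left_half h c else right_half h c)"

lemma wrong_half_subset_block: "wrong_half h g c \<subseteq> block h c"
  using left_half_subset_block right_half_subset_block by (simp add: wrong_half_def)

lemma card_wrong_half: "card (wrong_half h g c) = h"
  by (simp add: wrong_half_def card_left_half card_right_half)

lemma block_fun_neq_on_wrong_half:
  assumes "c \<in> S" "c \<notin> mixed_blocks h g S" and x: "x \<in> wrong_half h g c"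
  shows "block_fun h S x \<noteq> g x"
proof (cases "\<forall>a\<in>left_half h c. \<not> g a")
  case True
  then show ?thesis
    using x assms(1) block_fun_iff[of x h c S] by (auto simp: wrong_half_def)
next
  case False
  have "x \<in> right_half h c"
    using x unfolding wrong_half_def if_not_P[OF False] .
  moreover have "\<forall>z\<in>right_half h c. g z"
    using False assms(1,2) by (auto simp: mixed_blocks_def)
  ultimately show ?thesis
    using not_block_fun_right_half by blast
qed

lemma card_disagreements_ge:
  assumes km: "k_monotone n k g" and S: "S \<subseteq> {..<m}" and hm: "m * (2 * h) \<le> n"
  shows "(card S + 1 - (k + 2) div 2) * h \<le> card {x\<in>{1..n}. block_fun h S x \<noteq> g x}"
proof -
  define B where "B = S - mixed_blocks h g S"
  have "finite S"
    using S finite_subset by blast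
  then have "finite B"
    by (simp add: B_def)
  have "card B = card S - card (mixed_blocks h g S)"
    unfolding B_def using \<open>finite S\<close>
    by (intro card_Diff_subset) (auto simp: mixed_blocks_def intro: finite_subset)
  then have card_B: "card S + 1 - (k + 2) div 2 \<le> card B"
    using card_mixed_blocks_less[OF km S hm] by linarith
  have "card (\<Union>c\<in>B. wrong_half h g c) = (\<Sum>c\<in>B. card (wrong_half h g c))"
  proof (rule card_UN_disjoint[OF \<open>finite B\<close>])
    show "\<forall>c\<in>B. finite (wrong_half h g c)"
      by (simp add: wrong_half_def left_half_def right_half_def)
    show "\<forall>c\<in>B. \<forall>c'\<in>B. c \<noteq> c' \<longrightarrow> wrong_half h g c \<inter> wrong_half h g c' = {}"
      using wrong_half_subset_block block_eqI by blast
  qed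
  also have "\<dots> = card B * h"
    by (simp add: card_wrong_half)
  moreover have "(\<Union>c\<in>B. wrong_half h g c) \<subseteq> {x\<in>{1..n}. block_fun h S x \<noteq> g x}"
  proof (intro UN_least subsetI CollectI conjI)
    fix c x assume c: "c \<in> B" and x: "x \<in> wrong_half h g c"
    have "c < m"
      using c S by (auto simp: B_def)
    then show "x \<in> {1..n}"
      using x wrong_half_subset_block block_subset_atLeastAtMost[OF _ hm] by blast
    show "block_fun h S x \<noteq> g x"
      using c x by (intro block_fun_neq_on_wrong_half) (auto simp: B_def)
  qed
  then have "card (\<Union>c\<in>B. wrong_half h g c) \<le> card {x\<in>{1..n}. block_fun h S x \<noteq> g x}"
    by (intro card_mono) auto
  ultimately have "card B * h \<le> card {x\<in>{1..n}. block_fun h S x \<noteq> g x}"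
    by simp
  then show ?thesis
    using card_B mult_le_mono1 order_trans by blast
qed

lemma far_from_k_monotone_block_fun:
  assumes S: "S \<subseteq> {..<m}" "card S = 2 * r" and r: "r = (k + 2) div 2"
    and hm: "m * (2 * h) \<le> n" and n: "0 < n" and eps: "\<epsilon> * real n \<le> real ((r + 1) * h)"
  shows "far_from_k_monotone n k \<epsilon> (block_fun h S)"
  unfolding far_from_k_monotone_def
proof (intro allI impI)
  fix g assume "k_monotone n k g"
  moreover have "card S + 1 - (k + 2) div 2 = r + 1"
    using S(2) r by simp
  ultimately have "(r + 1) * h \<le> card {x\<in>{1..n}. block_fun h S x \<noteq> g x}"
    using card_disagreements_ge[OF _ S(1) hm, of k g] by simp
  then have "real ((r + 1) * h) \<le> real (card {x\<in>{1..n}. block_fun h S x \<noteq> g x})"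
    by (simp only: of_nat_le_iff)
  then show "\<epsilon> \<le> fdist n (block_fun h S) g"
    using eps n by (simp add: fdist_def field_simps)
qed

fun revealed :: "nat \<Rightarrow> dtree \<Rightarrow> nat set \<Rightarrow> nat set" where
  "revealed h (Leaf b) S = {}"
| "revealed h (Node x t0 t1) S =
    (if block_fun h S x then {c. x \<in> left_half h c} \<union> revealed h t1 S else revealed h t0 S)"

lemma revealed_subset: "revealed h t S \<subseteq> S"
  by (induction t) (auto simp: block_fun_def dest: left_half_eqI)

lemma run_block_fun_revealed:
  "revealed h t S \<subseteq> S' \<Longrightarrow> S' \<subseteq> S \<Longrightarrow> run t (block_fun h S') = run t (block_fun h S)"
proof (induction t)
  case (Node x t0 t1)
  have "block_fun h S' x \<longleftrightarrow> block_fun h S x"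
  proof
    assume "block_fun h S' x"
    then show "block_fun h S x"
      using Node.prems(2) by (auto simp: block_fun_def)
  next
    assume "block_fun h S x"
    then have "{c. x \<in> left_half h c} \<subseteq> S'"
      using Node.prems(1) by simp
    moreover obtain c where "x \<in> left_half h c"
      using \<open>block_fun h S x\<close> by (auto simp: block_fun_def)
    ultimately show "block_fun h S' x"
      by (auto simp: block_fun_def)
  qed
  then show ?case
    using Node by (auto split: if_splits)
qed simp

definition subsets_containing :: "nat \<Rightarrow> nat \<Rightarrow> nat set \<Rightarrow> nat set set" where
  "subsets_containing m s D = {S. S \<subseteq> {..<m} \<and> card S = s \<and> D \<subseteq> S}"

lemma finite_subsets_containing: "finite (subsets_containing m s D)"
  by (rule finite_subset[of _ "Pow {..<m}"]) (auto simp: subsets_containing_def)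

lemma card_subsets_containing_le:
  assumes "D \<subseteq> {..<m}"
  shows "card (subsets_containing m s D) \<le> (m - card D) choose (s - card D)"
proof -
  have "finite D"
    using assms finite_subset by blast
  have "inj_on (\<lambda>S. S - D) (subsets_containing m s D)"
    by (rule inj_onI) (auto simp: subsets_containing_def)
  moreover have "(\<lambda>S. S - D) ` subsets_containing m s D \<subseteq> {B. B \<subseteq> {..<m} - D \<and> card B = s - card D}"
    using \<open>finite D\<close> by (auto simp: subsets_containing_def card_Diff_subset intro: finite_subset)
  ultimately have "card (subsets_containing m s D) \<le> card {B. B \<subseteq> {..<m} - D \<and> card B = s - card D}"
    by (intro card_inj_on_le) auto
  also have "\<dots> = (m - card D) choose (s - card D)"
    using assms \<open>finite D\<close> by (simp add: n_subsets card_Diff_subset)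
  finally show ?thesis .
qed

lemma binomial_diff_Suc_le:
  assumes "d < s" "s \<le> m"
  shows "real ((m - Suc d) choose (s - Suc d)) \<le> real ((m - d) choose (s - d)) * (real s / real m)"
proof -
  define M K where "M = m - Suc d" and "K = s - Suc d"
  have m: "m - d = Suc M" and s: "s - d = Suc K"
    using assms by (simp_all add: M_def K_def)
  have ratio: "real (Suc K) / real (Suc M) \<le> real s / real m"
  proof -
    have "real d * real s \<le> real d * real m"
      using assms by (intro mult_left_mono) simp_all
    then have "(real s - real d) * real m \<le> real s * (real m - real d)"
      by (simp add: algebra_simps)
    moreover have "real (Suc K) = real s - real d" "real (Suc M) = real m - real d"
      using assms m s by (simp_all flip: m s)
    ultimately show ?thesis
      using assms m by (simp add: divide_simps)
  qed
  have "real (Suc K) * real (Suc M choose Suc K) = real (Suc M) * real (M choose K)"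
    using Suc_times_binomial[of K M] by (simp only: of_nat_mult[symmetric])
  then have "real (M choose K) = real (Suc M choose Suc K) * (real (Suc K) / real (Suc M))"
    by (simp add: field_simps)
  also have "\<dots> \<le> real (Suc M choose Suc K) * (real s / real m)"
    using ratio by (intro mult_left_mono) auto
  finally show ?thesis
    by (simp add: m s M_def K_def)
qed

lemma power_le_three_power_fact: "real r ^ r \<le> 3 ^ r * fact r"
proof -
  have series: "(\<lambda>n. real r ^ n /\<^sub>R fact n) sums exp (real r)"
    by (rule exp_converges)
  have "real r ^ r / fact r \<le> exp (real r)"
    using sum_le_suminf[OF sums_summable[OF series], of "{r}"] sums_unique[OF series]
    by (simp add: field_class.field_divide_inverse mult.commute)
  also have "exp (real r) = exp 1 ^ r"
    using exp_of_nat_mult[of r 1] by simp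
  also have "\<dots> \<le> 3 ^ r"
    by (intro power_mono exp_le) simp
  finally show ?thesis
    by (simp add: divide_simps mult.commute)
qed

text \<open>Bound on the number of sets S \<supseteq> D, |D| = d, on which a tree with q queries reveals r blocks:
  the r - d missing blocks are found at one of (q choose (r - d)) sets of query positions, and
  fixing them inside S costs the factor (s / m) per block.\<close>

definition reveal_bound :: "nat \<Rightarrow> nat \<Rightarrow> nat \<Rightarrow> nat \<Rightarrow> nat \<Rightarrow> real" where
  "reveal_bound m s r q d =
     real ((m - d) choose (s - d)) * real (q choose (r - d)) * (real s / real m) ^ (r - d)"

lemma reveal_bound_nonneg: "0 \<le> reveal_bound m s r q d"
  by (simp add: reveal_bound_def)

lemma reveal_bound_saturated: "r \<le> d \<Longrightarrow> reveal_bound m s r q d = real ((m - d) choose (s - d))"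
  by (simp add: reveal_bound_def)

lemma reveal_bound_mono:
  assumes "q \<le> q'"
  shows "reveal_bound m s r q d \<le> reveal_bound m s r q' d"
proof -
  have "real (q choose (r - d)) \<le> real (q' choose (r - d))"
    using binomial_right_mono[OF assms] by (simp only: of_nat_le_iff)
  then show ?thesis
    unfolding reveal_bound_def by (intro mult_right_mono mult_left_mono) auto
qed

lemma reveal_bound_Suc:
  assumes "d < r" "r \<le> s" "s \<le> m"
  shows "reveal_bound m s r q (Suc d) + reveal_bound m s r q d \<le> reveal_bound m s r (Suc q) d"
proof -
  define p where "p = real s / real m"
  define e where "e = r - Suc d"
  have e: "r - d = Suc e"
    using assms(1) by (simp add: e_def)
  have "reveal_bound m s r q (Suc d) + reveal_bound m s r q d
      = real ((m - Suc d) choose (s - Suc d)) * real (q choose e) * p ^ e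
        + real ((m - d) choose (s - d)) * real (q choose Suc e) * p ^ Suc e"
    by (simp add: reveal_bound_def e e_def[symmetric] p_def)
  also have "\<dots> \<le> real ((m - d) choose (s - d)) * p * real (q choose e) * p ^ e
        + real ((m - d) choose (s - d)) * real (q choose Suc e) * p ^ Suc e"
    using binomial_diff_Suc_le[of d s m] assms
    by (intro add_mono mult_right_mono) (auto simp: p_def)
  also have "\<dots> = real ((m - d) choose (s - d)) * real (Suc q choose Suc e) * p ^ Suc e"
    by (simp add: algebra_simps)
  also have "\<dots> = reveal_bound m s r (Suc q) d"
    by (simp add: reveal_bound_def e p_def)
  finally show ?thesis .
qed

lemma reveal_bound_start_le:
  assumes r: "1 \<le> r" and s: "s = 2 * r" "s \<le> m" and q: "12 * q \<le> m"
  shows "reveal_bound m s r q 0 \<le> real (m choose s) / 2"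
proof -
  have "0 < m"
    using assms by linarith
  define y where "y = 2 * real q / real m"
  have "0 \<le> y"
    by (simp add: y_def)
  have "real ((q choose r) * fact r) \<le> real (q ^ r)"
    using binomial_fact_pow[of q r] by (rule of_nat_mono)
  then have "real (q choose r) * fact r \<le> real q ^ r"
    by simp
  have "real (q choose r) * (real s / real m) ^ r * fact r
      = real (q choose r) * fact r * (real s / real m) ^ r"
    by (simp only: mult_ac)
  also have "\<dots> \<le> real q ^ r * (real s / real m) ^ r"
    using \<open>real (q choose r) * fact r \<le> real q ^ r\<close> by (intro mult_right_mono) auto
  also have "\<dots> = (real q * (real s / real m)) ^ r"
    by (rule power_mult_distrib[symmetric])
  also have "real q * (real s / real m) = y * real r"
    by (simp add: y_def s)
  also have "(y * real r) ^ r = y ^ r * real r ^ r"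
    by (rule power_mult_distrib)
  also have "\<dots> \<le> y ^ r * (3 ^ r * fact r)"
    using power_le_three_power_fact[of r] \<open>0 \<le> y\<close> by (intro mult_left_mono) auto
  also have "\<dots> = (3 * y) ^ r * fact r"
    by (simp only: power_mult_distrib mult_ac)
  also have "\<dots> \<le> (1 / 2) ^ r * fact r"
  proof -
    have "6 * real q \<le> real m / 2"
      using q by linarith
    then have "3 * y \<le> 1 / 2"
      using \<open>0 < m\<close> by (simp add: y_def divide_simps)
    then show ?thesis
      using \<open>0 \<le> y\<close> by (intro mult_right_mono power_mono) auto
  qed
  finally have "real (q choose r) * (real s / real m) ^ r \<le> (1 / 2) ^ r"
    by simp
  also have "\<dots> \<le> 1 / 2"
    using power_decreasing[of 1 r "1 / 2 :: real"] r by simp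
  finally have "real (m choose s) * (real (q choose r) * (real s / real m) ^ r) \<le> real (m choose s) * (1 / 2)"
    by (intro mult_left_mono) simp_all
  then show ?thesis
    by (simp add: reveal_bound_def mult.assoc)
qed

lemma card_revealing_saturated:
  assumes "r \<le> card D" "D \<subseteq> {..<m}" "A \<subseteq> subsets_containing m s D"
  shows "real (card {S\<in>A. P S}) \<le> reveal_bound m s r q (card D)"
proof -
  have "card {S\<in>A. P S} \<le> card (subsets_containing m s D)"
    using assms(3) by (intro card_mono finite_subsets_containing) auto
  also have "\<dots> \<le> (m - card D) choose (s - card D)"
    using assms(2) by (rule card_subsets_containing_le)
  finally show ?thesis
    by (simp add: reveal_bound_saturated[OF assms(1)])
qed

lemma revealed_Node_split:
  "{S\<in>A. r \<le> card (D \<union> revealed h (Node x t0 t1) S)} =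
     {S\<in>{S\<in>A. block_fun h S x}. r \<le> card ((D \<union> {c. x \<in> left_half h c}) \<union> revealed h t1 S)} \<union>
     {S\<in>{S\<in>A. \<not> block_fun h S x}. r \<le> card (D \<union> revealed h t0 S)}"
  by (auto simp: Un_assoc)

lemma card_revealing_Node_le:
  fixes A :: "nat set set" and D :: "nat set" and h x :: nat
  defines "A1 \<equiv> {S\<in>A. block_fun h S x}" and "D1 \<equiv> D \<union> {c. x \<in> left_half h c}"
  assumes "card D < r" "r \<le> s" "s \<le> m" and D: "D \<subseteq> {..<m}" and A: "A \<subseteq> subsets_containing m s D"
    and part1: "A1 \<noteq> {} \<Longrightarrow>
      real (card {S\<in>A1. r \<le> card (D1 \<union> revealed h t1 S)}) \<le> reveal_bound m s r q (card D1)"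
    and part0: "real (card {S\<in>{S\<in>A. \<not> block_fun h S x}. r \<le> card (D \<union> revealed h t0 S)})
      \<le> reveal_bound m s r q (card D)"
  shows "real (card {S\<in>A. r \<le> card (D \<union> revealed h (Node x t0 t1) S)}) \<le> reveal_bound m s r (Suc q) (card D)"
proof -
  let ?part1 = "{S\<in>A1. r \<le> card (D1 \<union> revealed h t1 S)}"
  let ?part0 = "{S\<in>{S\<in>A. \<not> block_fun h S x}. r \<le> card (D \<union> revealed h t0 S)}"
  have "finite D" "finite A"
    using D A finite_subsets_containing by (auto intro: finite_subset)
  have "card {S\<in>A. r \<le> card (D \<union> revealed h (Node x t0 t1) S)} = card ?part1 + card ?part0"
    unfolding revealed_Node_split A1_def D1_def using \<open>finite A\<close> by (intro card_Un_disjoint) auto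
  then have total: "real (card {S\<in>A. r \<le> card (D \<union> revealed h (Node x t0 t1) S)})
      = real (card ?part1) + real (card ?part0)"
    by simp
  show ?thesis
  proof (cases "\<exists>c\<in>D. x \<in> left_half h c")
    case True
    \<comment> \<open>The query hits a block already known to be in every S, so nothing new is learned.\<close>
    then have "block_fun h S x" if "S \<in> A" for S
      using that A by (auto simp: subsets_containing_def block_fun_def)
    then have "?part0 = {}"
      by auto
    have "D1 = D"
      using True by (auto simp: D1_def dest: left_half_eqI)
    have "real (card ?part1) \<le> reveal_bound m s r q (card D)"
    proof (cases "A1 = {}")
      case True
      then show ?thesis
        by (simp add: reveal_bound_nonneg)
    next
      case False
      then show ?thesis
        using part1 \<open>D1 = D\<close> by simp
    qed
    moreover have "real (card {S\<in>A. r \<le> card (D \<union> revealed h (Node x t0 t1) S)}) = real (card ?part1)"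
      using total \<open>?part0 = {}\<close> by (simp only: card.empty of_nat_0 add_0_right)
    ultimately have "real (card {S\<in>A. r \<le> card (D \<union> revealed h (Node x t0 t1) S)})
        \<le> reveal_bound m s r q (card D)"
      by simp
    also have "\<dots> \<le> reveal_bound m s r (Suc q) (card D)"
      by (intro reveal_bound_mono) simp
    finally show ?thesis .
  next
    case False
    have "real (card ?part1) \<le> reveal_bound m s r q (Suc (card D))"
    proof (cases "A1 = {}")
      case True
      then show ?thesis
        by (simp add: reveal_bound_nonneg)
    next
      case nonempty: False
      then obtain c where "x \<in> left_half h c"
        by (auto simp: A1_def block_fun_def)
      then have "card D1 = Suc (card D)"
        using False \<open>finite D\<close> left_half_blocks[of x h c] by (auto simp: D1_def)
      then show ?thesis
        using part1[OF nonempty] by simp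
    qed
    then show ?thesis
      using total part0 reveal_bound_Suc[OF assms(3-5), of q] by simp
  qed
qed

lemma card_revealing_le:
  assumes "r \<le> s" "s \<le> m"
  shows "D \<subseteq> {..<m} \<Longrightarrow> A \<subseteq> subsets_containing m s D \<Longrightarrow>
    \<forall>S\<in>A. num_queries t (block_fun h S) \<le> q \<Longrightarrow>
    real (card {S\<in>A. r \<le> card (D \<union> revealed h t S)}) \<le> reveal_bound m s r q (card D)"
proof (induction t arbitrary: D A q)
  case (Leaf b)
  show ?case
  proof (cases "r \<le> card D")
    case True
    then show ?thesis
      by (rule card_revealing_saturated[OF _ Leaf.prems(1,2)])
  qed (simp add: reveal_bound_nonneg)
next
  case (Node x t0 t1)
  show ?case
  proof (cases "r \<le> card D \<or> A = {}")
    case True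
    then show ?thesis
    proof
      assume "r \<le> card D"
      then show ?thesis
        by (rule card_revealing_saturated[OF _ Node.prems(1,2)])
    qed (simp add: reveal_bound_nonneg)
  next
    case False
    then obtain q' where q: "q = Suc q'"
      using Node.prems(3) by (cases q) auto
    have "real (card {S\<in>A. r \<le> card (D \<union> revealed h (Node x t0 t1) S)}) \<le> reveal_bound m s r (Suc q') (card D)"
    proof (rule card_revealing_Node_le)
      show "card D < r"
        using False by simp
      show "real (card {S\<in>{S\<in>A. block_fun h S x}. r \<le> card (D \<union> {c. x \<in> left_half h c} \<union> revealed h t1 S)})
          \<le> reveal_bound m s r q' (card (D \<union> {c. x \<in> left_half h c}))"
        if nonempty: "{S\<in>A. block_fun h S x} \<noteq> {}"
      proof (rule Node.IH(2))
        obtain S c where "S \<in> A" "c \<in> S" "x \<in> left_half h c"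
          using nonempty by (auto simp: block_fun_def)
        then show "D \<union> {c. x \<in> left_half h c} \<subseteq> {..<m}"
          using Node.prems(1,2) left_half_blocks[of x h c] by (auto simp: subsets_containing_def)
        show "{S\<in>A. block_fun h S x} \<subseteq> subsets_containing m s (D \<union> {c. x \<in> left_half h c})"
          using Node.prems(2) by (auto simp: subsets_containing_def block_fun_def dest: left_half_eqI)
        show "\<forall>S\<in>{S\<in>A. block_fun h S x}. num_queries t1 (block_fun h S) \<le> q'"
          using Node.prems(3) q by auto
      qed
      show "real (card {S\<in>{S\<in>A. \<not> block_fun h S x}. r \<le> card (D \<union> revealed h t0 S)})
          \<le> reveal_bound m s r q' (card D)"
        by (rule Node.IH(1)) (use Node.prems q in auto)
    qed (use assms Node.prems in auto)
    then show ?thesis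
      using q by simp
  qed
qed

lemma card_rejecting_le:
  assumes accepts: "\<And>f. k_monotone n k f \<Longrightarrow> run t f"
    and queries: "\<And>f. num_queries t f \<le> q"
    and r: "r = (k + 2) div 2" "r \<le> s" "s \<le> m"
  shows "real (card {S\<in>subsets_containing m s {}. \<not> run t (block_fun h S)}) \<le> reveal_bound m s r q 0"
proof -
  \<comment> \<open>If fewer than r blocks are revealed, t cannot tell S from the k-monotone function of the revealed blocks.\<close>
  have "{S\<in>subsets_containing m s {}. \<not> run t (block_fun h S)}
      \<subseteq> {S\<in>subsets_containing m s {}. r \<le> card ({} \<union> revealed h t S)}"
  proof safe
    fix S assume S: "S \<in> subsets_containing m s {}" and rejects: "\<not> run t (block_fun h S)"
    show "r \<le> card ({} \<union> revealed h t S)"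
    proof (rule ccontr)
      have "finite (revealed h t S)"
        using S revealed_subset[of h t S] by (auto simp: subsets_containing_def intro: finite_subset)
      moreover assume "\<not> r \<le> card ({} \<union> revealed h t S)"
      ultimately have "k_monotone n k (block_fun h (revealed h t S))"
        using r(1) by (intro block_fun_k_monotone) auto
      then have "run t (block_fun h (revealed h t S))"
        by (rule accepts)
      then show False
        using rejects run_block_fun_revealed[OF order_refl revealed_subset] by simp
    qed
  qed
  then have "card {S\<in>subsets_containing m s {}. \<not> run t (block_fun h S)}
      \<le> card {S\<in>subsets_containing m s {}. r \<le> card ({} \<union> revealed h t S)}"
    by (intro card_mono) (simp_all add: finite_subsets_containing)
  also have "real \<dots> \<le> reveal_bound m s r q (card ({} :: nat set))"
    using card_revealing_le[OF r(2,3), of "{}" "subsets_containing m s {}" t h q] queries by simp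
  finally show ?thesis
    by simp
qed

lemma prob_eq_1_imp_set_pmf:
  assumes "measure_pmf.prob T A = 1" "t \<in> set_pmf T"
  shows "t \<in> A"
proof -
  have "AE x in measure_pmf T. x \<in> A"
    using assms(1) by (subst measure_pmf.prob_eq_1[symmetric]) auto
  then show ?thesis
    using assms(2) by (simp add: AE_measure_pmf_iff)
qed

lemma card_mult_le_by_averaging:
  fixes T :: "'b pmf" and P :: "'a \<Rightarrow> 'b \<Rightarrow> bool"
  assumes "finite F" and prob: "\<forall>S\<in>F. a \<le> measure_pmf.prob T {t. P S t}"
    and count: "\<forall>t\<in>set_pmf T. real (card {S\<in>F. P S t}) \<le> B"
  shows "real (card F) * a \<le> B"
proof -
  have card_eq: "real (card {S\<in>F. P S t}) = (\<Sum>S\<in>F. indicator {t. P S t} t)" for t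
    using \<open>finite F\<close> by (simp add: sum.If_cases indicator_def Int_def)
  have "real (card F) * a \<le> (\<Sum>S\<in>F. measure_pmf.prob T {t. P S t})"
    using sum_mono[OF prob[rule_format]] by simp
  also have "\<dots> = measure_pmf.expectation T (\<lambda>t. \<Sum>S\<in>F. indicator {t. P S t} t)"
    by (subst Bochner_Integration.integral_sum) (auto intro!: measure_pmf.integrable_const_bound[where B=1])
  also have "\<dots> = measure_pmf.expectation T (\<lambda>t. real (card {S\<in>F. P S t}))"
    by (simp add: card_eq)
  also have "\<dots> \<le> B"
  proof (rule measure_pmf.integral_le_const)
    show "integrable (measure_pmf T) (\<lambda>t. real (card {S\<in>F. P S t}))"
      using \<open>finite F\<close> by (intro measure_pmf.integrable_const_bound[where B="real (card F)"]) (auto intro!: card_mono)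
    show "AE t in measure_pmf T. real (card {S\<in>F. P S t}) \<le> B"
      using count by (simp add: AE_measure_pmf_iff)
  qed
  finally show ?thesis .
qed

lemma one_sided_tester_many_queries:
  assumes tester: "one_sided_tester n k \<epsilon> T q"
    and r: "r = (k + 2) div 2" and m: "2 * r \<le> m" and hm: "m * (2 * h) \<le> n" and "0 < n"
    and eps: "\<epsilon> * real n \<le> real ((r + 1) * h)"
  shows "m < 12 * q"
proof (rule ccontr)
  assume "\<not> m < 12 * q"
  then have q: "12 * q \<le> m"
    by simp
  define F where "F = subsets_containing m (2 * r) {}"
  have card_F: "card F = m choose (2 * r)"
    using n_subsets[of "{..<m}" "2 * r"] by (simp add: F_def subsets_containing_def)
  have "1 \<le> r"
    using r by simp
  have "\<forall>S\<in>F. 2 / 3 \<le> measure_pmf.prob T {t. \<not> run t (block_fun h S)}"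
    using tester far_from_k_monotone_block_fun[OF _ _ r hm \<open>0 < n\<close> eps]
    by (auto simp: F_def subsets_containing_def one_sided_tester_def)
  moreover have "\<forall>t\<in>set_pmf T. real (card {S\<in>F. \<not> run t (block_fun h S)}) \<le> real (m choose (2 * r)) / 2"
  proof
    fix t assume t: "t \<in> set_pmf T"
    have "real (card {S\<in>F. \<not> run t (block_fun h S)}) \<le> reveal_bound m (2 * r) r q 0"
      unfolding F_def
    proof (rule card_rejecting_le[OF _ _ r _ m])
      show "run t f" if "k_monotone n k f" for f
        using tester that prob_eq_1_imp_set_pmf[OF _ t, of "{t. run t f}"]
        by (simp add: one_sided_tester_def)
      show "num_queries t f \<le> q" for f
        using tester t by (simp add: one_sided_tester_def)
    qed simp
    also have "\<dots> \<le> real (m choose (2 * r)) / 2"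
      using reveal_bound_start_le[OF \<open>1 \<le> r\<close> refl m q] .
    finally show "real (card {S\<in>F. \<not> run t (block_fun h S)}) \<le> real (m choose (2 * r)) / 2" .
  qed
  ultimately have "real (card F) * (2 / 3) \<le> real (m choose (2 * r)) / 2"
    by (intro card_mult_le_by_averaging) (simp_all add: F_def finite_subsets_containing)
  moreover have "0 < m choose (2 * r)"
    using m by (simp add: zero_less_binomial)
  ultimately show False
    unfolding card_F by simp
qed

lemma block_count_choice:
  assumes "1 \<le> r" "0 < \<epsilon>" "\<epsilon> \<le> 1 / 100"
  obtains m where "2 * r \<le> m" "4 * \<epsilon> * real m \<le> real r" "real r \<le> 8 * \<epsilon> * real m"
proof
  define x where "x = real r / (4 * \<epsilon>)"
  have "0 \<le> x"
    using assms by (simp add: x_def)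
  then have m_le: "real (nat \<lfloor>x\<rfloor>) \<le> x" and m_gt: "x - 1 < real (nat \<lfloor>x\<rfloor>)"
    by linarith+
  have "\<epsilon> * 100 * real r \<le> real r"
    using mult_right_mono[of "\<epsilon> * 100" 1 "real r"] assms by simp
  then have "25 * real r \<le> x"
    using assms by (simp add: x_def field_simps)
  then show "2 * r \<le> nat \<lfloor>x\<rfloor>"
    using m_gt assms(1) by linarith
  have "4 * \<epsilon> * real (nat \<lfloor>x\<rfloor>) \<le> 4 * \<epsilon> * x"
    using m_le assms by (intro mult_left_mono) auto
  also have "4 * \<epsilon> * x = real r"
    using assms by (simp add: x_def)
  finally show "4 * \<epsilon> * real (nat \<lfloor>x\<rfloor>) \<le> real r" .
  have "x = 2 * (real r / (8 * \<epsilon>))" "1 \<le> real r / (8 * \<epsilon>)"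
    using assms by (simp_all add: x_def field_simps)
  then have "real r / (8 * \<epsilon>) \<le> real (nat \<lfloor>x\<rfloor>)"
    using m_gt by linarith
  then show "real r \<le> 8 * \<epsilon> * real (nat \<lfloor>x\<rfloor>)"
    using assms by (simp add: field_simps)
qed

lemma block_length_choice:
  assumes "0 < \<epsilon>" "0 < m" "4 * \<epsilon> * real m \<le> real r" and n: "real (r + 1) / \<epsilon> \<le> real n"
  obtains h where "m * (2 * h) \<le> n" "\<epsilon> * real n \<le> real ((r + 1) * h)"
proof
  define h where "h = n div (2 * m)"
  have "h * (2 * m) \<le> n"
    unfolding h_def by (rule div_times_less_eq_dividend)
  then show "m * (2 * h) \<le> n"
    by (simp add: algebra_simps)
  have "n < (h + 1) * (2 * m)"
    using \<open>0 < m\<close> by (simp add: h_def dividend_less_div_times)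
  then have "real n < real ((h + 1) * (2 * m))"
    by (simp only: of_nat_less_iff)
  then have h: "real n / (2 * real m) - 1 \<le> real h"
    using \<open>0 < m\<close> by (simp add: field_simps)
  have "0 \<le> real n"
    by simp
  have "real r + 1 \<le> \<epsilon> * real n"
    using n assms by (simp add: field_simps)
  have "2 * \<epsilon> * real n = 4 * \<epsilon> * real m * (real n / (2 * real m))"
    using assms by (simp add: field_simps)
  also have "\<dots> \<le> real r * (real n / (2 * real m))"
    using assms by (intro mult_right_mono) auto
  finally have "2 * \<epsilon> * real n \<le> real r * (real n / (2 * real m))" .
  moreover have "(real r + 1) * (real n / (2 * real m) - 1) \<le> (real r + 1) * real h"
    using h by (intro mult_left_mono) auto
  moreover have "real r * (real n / (2 * real m)) \<le> (real r + 1) * (real n / (2 * real m))"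
    using assms by (intro mult_right_mono) auto
  ultimately show "\<epsilon> * real n \<le> real ((r + 1) * h)"
    using \<open>real r + 1 \<le> \<epsilon> * real n\<close> by (simp add: algebra_simps)
qed

lemma queries_lower_bound:
  assumes "1 \<le> k" "0 < \<epsilon>" "\<epsilon> \<le> 1 / 100"
  shows "\<exists>N. \<forall>n\<ge>N. \<forall>T q. one_sided_tester n k \<epsilon> T q \<longrightarrow> 1 / 200 * real k / \<epsilon> \<le> real q"
proof -
  define r where "r = (k + 2) div 2"
  have "1 \<le> r" "real k \<le> 2 * real r"
    unfolding r_def by linarith+
  obtain m where m: "2 * r \<le> m" "4 * \<epsilon> * real m \<le> real r" "real r \<le> 8 * \<epsilon> * real m"
    using block_count_choice[OF \<open>1 \<le> r\<close> assms(2,3)] .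
  have "0 < m"
    using m(1) \<open>1 \<le> r\<close> by linarith
  show ?thesis
  proof (intro exI allI impI)
    fix n T q
    assume n: "nat \<lceil>real (r + 1) / \<epsilon>\<rceil> \<le> n" and tester: "one_sided_tester n k \<epsilon> T q"
    have n_ge: "real (r + 1) / \<epsilon> \<le> real n"
      using n by linarith
    moreover have "0 < real (r + 1) / \<epsilon>"
      using assms by simp
    ultimately have "0 < n"
      by simp
    obtain h where "m * (2 * h) \<le> n" "\<epsilon> * real n \<le> real ((r + 1) * h)"
      using block_length_choice[OF assms(2) \<open>0 < m\<close> m(2) n_ge] .
    then have "m < 12 * q"
      using one_sided_tester_many_queries[OF tester r_def m(1)] \<open>0 < n\<close> by blast
    then have "real m \<le> 12 * real q"
      by linarith
    then have "16 * \<epsilon> * real m \<le> 16 * \<epsilon> * (12 * real q)"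
      using assms by (intro mult_left_mono) auto
    then have "real k \<le> 192 * \<epsilon> * real q"
      using \<open>real k \<le> 2 * real r\<close> m(3) by linarith
    then show "1 / 200 * real k / \<epsilon> \<le> real q"
      using assms by (simp add: field_simps)
  qed
qed

theorem theorem1p3:
  shows "\<exists>c>0. \<exists>\<epsilon>\<^sub>0>0. \<forall>(k::nat) (\<epsilon>::real). 0 < \<epsilon> \<and> \<epsilon> \<le> \<epsilon>\<^sub>0 \<longrightarrow>
           (\<exists>N. \<forall>n\<ge>N. \<forall>T q. one_sided_tester n k \<epsilon> T q \<longrightarrow> real q \<ge> c * real k / \<epsilon>)"
proof -
  have main: "\<exists>N. \<forall>n\<ge>N. \<forall>T q. one_sided_tester n k \<epsilon> T q \<longrightarrow> real q \<ge> 1 / 200 * real k / \<epsilon>"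
    if "0 < \<epsilon> \<and> \<epsilon> \<le> 1 / 100" for k :: nat and \<epsilon> :: real
    using queries_lower_bound[of k \<epsilon>] that by (cases "k = 0") auto
  show ?thesis
    by (rule exI[of _ "1 / 200"], simp, rule exI[of _ "1 / 100"]) (use main in auto)
qed

end
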